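(* Let $X,Y,\hat X,\hat Y$ be Banach spaces and let $T\colon X\to Y$ and $\hat T\colon\hat X\to\hat Y$ be bounded linear operators such that $(X,Y,T)\equiv(\hat X,\hat Y,\hat T)$. Then $T$ is surjective if and only if $\hat T$ is surjective.
   Context: A Banach space $X$ is regarded as a many-sorted metric structure with one sort $B_X(r)$ for each nonnegative rational $r$ (the closed ball of radius $r$ about $0$), together with: the inclusion maps $B_X(r)\to B_X(s)$ for $r<s$; vector addition $B_X(r)\times B_X(s)\to B_X(r+s)$; for each $\lambda\in\mathbb{Q}$, multiplication by $\lambda$ as a map $B_X(r)\to B_X(|\lambda|r)$; the normalized norm predicate $\|x\|/r$ on $B_X(r)$; and the metric $d(x,y)=\|x-y\|/(2r)$ on $B_X(r)$. For a bounded operator $T\colon X\to Y$, the structure $(X,Y,T)$ consists of the structures of $X$ and $Y$ on disjoint sorts together with $T$ as the family of maps $B_X(r)\to B_Y(s)$ for $s\ge\|T\|r$. Finitary formulas are built from atomic formulas using the connectives $1-x$, $x/2$, $\min(x+y,1)$ (equivalently $\max(x-y,0)$) and the quantifiers $\inf_x,\sup_x$ over the sorts, with values in $[0,1]$. $M\equiv N$ means $\phi^M=\phi^N$ for every finitary sentence $\phi$ (in the common signature). *)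

theory Defs
  imports "HOL-Analysis.Analysis"
begin

text \<open>Sides: the sorts B_X(r) and B_Y(r), r a nonnegative rational.\<close>
datatype side = SX | SY

text \<open>Each constructor carries the sort indices it is typed with.
  V n sd r      : variable number n of sort B_sd(r)
  Inc sd r s t  : inclusion B_sd(r) -> B_sd(s), r < s
  Add sd r s t u: addition B_sd(r) x B_sd(s) -> B_sd(r+s)
  Scal sd l r t : multiplication by l, B_sd(r) -> B_sd(|l| r)
  App r s t     : the operator symbol B_X(r) -> B_Y(s)\<close>
datatype tm =
    V nat side rat
  | Inc side rat rat tm
  | Add side rat rat tm tm
  | Scal side rat rat tm
  | App rat rat tm

text \<open>Formulas: atomic norm / metric predicates, connectives 1-x, x/2,
  min(x+y,1), and quantifiers over sorts.\<close>
datatype fm =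
    FNorm side rat tm
  | FDist side rat tm tm
  | FNeg fm
  | FHalf fm
  | FPlus fm fm
  | FInf nat side rat fm
  | FSup nat side rat fm

text \<open>Sort of a term; the argument \<open>c\<close> says which operator symbols
  T_{r,s} : B_X(r) -> B_Y(s) belong to the signature.\<close>
fun sort_of :: "(rat \<Rightarrow> rat \<Rightarrow> bool) \<Rightarrow> tm \<Rightarrow> (side \<times> rat) option" where
  "sort_of c (V n sd r) = (if 0 \<le> r then Some (sd, r) else None)"
| "sort_of c (Inc sd r s t) =
     (if sort_of c t = Some (sd, r) \<and> r < s then Some (sd, s) else None)"
| "sort_of c (Add sd r s t u) =
     (if sort_of c t = Some (sd, r) \<and> sort_of c u = Some (sd, s) then Some (sd, r + s) else None)"
| "sort_of c (Scal sd l r t) =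
     (if sort_of c t = Some (sd, r) then Some (sd, \<bar>l\<bar> * r) else None)"
| "sort_of c (App r s t) =
     (if sort_of c t = Some (SX, r) \<and> c r s then Some (SY, s) else None)"

fun wf_fm :: "(rat \<Rightarrow> rat \<Rightarrow> bool) \<Rightarrow> fm \<Rightarrow> bool" where
  "wf_fm c (FNorm sd r t) = (sort_of c t = Some (sd, r))"
| "wf_fm c (FDist sd r t u) = (sort_of c t = Some (sd, r) \<and> sort_of c u = Some (sd, r))"
| "wf_fm c (FNeg \<phi>) = wf_fm c \<phi>"
| "wf_fm c (FHalf \<phi>) = wf_fm c \<phi>"
| "wf_fm c (FPlus \<phi> \<psi>) = (wf_fm c \<phi> \<and> wf_fm c \<psi>)"
| "wf_fm c (FInf n sd r \<phi>) = (0 \<le> r \<and> wf_fm c \<phi>)"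
| "wf_fm c (FSup n sd r \<phi>) = (0 \<le> r \<and> wf_fm c \<phi>)"

fun fv_tm :: "tm \<Rightarrow> (nat \<times> side \<times> rat) set" where
  "fv_tm (V n sd r) = {(n, sd, r)}"
| "fv_tm (Inc sd r s t) = fv_tm t"
| "fv_tm (Add sd r s t u) = fv_tm t \<union> fv_tm u"
| "fv_tm (Scal sd l r t) = fv_tm t"
| "fv_tm (App r s t) = fv_tm t"

fun fv_fm :: "fm \<Rightarrow> (nat \<times> side \<times> rat) set" where
  "fv_fm (FNorm sd r t) = fv_tm t"
| "fv_fm (FDist sd r t u) = fv_tm t \<union> fv_tm u"
| "fv_fm (FNeg \<phi>) = fv_fm \<phi>"
| "fv_fm (FHalf \<phi>) = fv_fm \<phi>"
| "fv_fm (FPlus \<phi> \<psi>) = fv_fm \<phi> \<union> fv_fm \<psi>"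
| "fv_fm (FInf n sd r \<phi>) = fv_fm \<phi> - {(n, sd, r)}"
| "fv_fm (FSup n sd r \<phi>) = fv_fm \<phi> - {(n, sd, r)}"

text \<open>Values of terms live in X + Y. Assignments: \<open>ax n r\<close> is the value of
  the variable (n, SX, r), \<open>ay n r\<close> that of (n, SY, r).\<close>
fun tm_eval :: "('x::real_normed_vector \<Rightarrow> 'y::real_normed_vector) \<Rightarrow>
    (nat \<Rightarrow> rat \<Rightarrow> 'x) \<Rightarrow> (nat \<Rightarrow> rat \<Rightarrow> 'y) \<Rightarrow> tm \<Rightarrow> 'x + 'y" where
  "tm_eval T ax ay (V n SX r) = Inl (ax n r)"
| "tm_eval T ax ay (V n SY r) = Inr (ay n r)"
| "tm_eval T ax ay (Inc sd r s t) = tm_eval T ax ay t"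
| "tm_eval T ax ay (Add sd r s t u) =
     (case (tm_eval T ax ay t, tm_eval T ax ay u) of
        (Inl a, Inl b) \<Rightarrow> Inl (a + b)
      | (Inr a, Inr b) \<Rightarrow> Inr (a + b)
      | (a, b) \<Rightarrow> a)"
| "tm_eval T ax ay (Scal sd l r t) =
     (case tm_eval T ax ay t of
        Inl a \<Rightarrow> Inl (real_of_rat l *\<^sub>R a)
      | Inr b \<Rightarrow> Inr (real_of_rat l *\<^sub>R b))"
| "tm_eval T ax ay (App r s t) =
     (case tm_eval T ax ay t of Inl a \<Rightarrow> Inr (T a) | Inr b \<Rightarrow> Inr b)"

fun snorm :: "('x::real_normed_vector) + ('y::real_normed_vector) \<Rightarrow> real" where
  "snorm (Inl a) = norm a"
| "snorm (Inr b) = norm b"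

fun sdiff :: "('x::real_normed_vector) + ('y::real_normed_vector) \<Rightarrow> 'x + 'y \<Rightarrow> real" where
  "sdiff (Inl a) (Inl b) = norm (a - b)"
| "sdiff (Inr a) (Inr b) = norm (a - b)"
| "sdiff _ _ = 0"

fun fm_val :: "('x::real_normed_vector \<Rightarrow> 'y::real_normed_vector) \<Rightarrow>
    (nat \<Rightarrow> rat \<Rightarrow> 'x) \<Rightarrow> (nat \<Rightarrow> rat \<Rightarrow> 'y) \<Rightarrow> fm \<Rightarrow> real" where
  "fm_val T ax ay (FNorm sd r t) = snorm (tm_eval T ax ay t) / real_of_rat r"
| "fm_val T ax ay (FDist sd r t u) =
     sdiff (tm_eval T ax ay t) (tm_eval T ax ay u) / (2 * real_of_rat r)"
| "fm_val T ax ay (FNeg \<phi>) = 1 - fm_val T ax ay \<phi>"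
| "fm_val T ax ay (FHalf \<phi>) = fm_val T ax ay \<phi> / 2"
| "fm_val T ax ay (FPlus \<phi> \<psi>) = min (fm_val T ax ay \<phi> + fm_val T ax ay \<psi>) 1"
| "fm_val T ax ay (FInf n SX r \<phi>) =
     (INF x\<in>{x. norm x \<le> real_of_rat r}. fm_val T (ax(n := (ax n)(r := x))) ay \<phi>)"
| "fm_val T ax ay (FInf n SY r \<phi>) =
     (INF y\<in>{y. norm y \<le> real_of_rat r}. fm_val T ax (ay(n := (ay n)(r := y))) \<phi>)"
| "fm_val T ax ay (FSup n SX r \<phi>) =
     (SUP x\<in>{x. norm x \<le> real_of_rat r}. fm_val T (ax(n := (ax n)(r := x))) ay \<phi>)"
| "fm_val T ax ay (FSup n SY r \<phi>) =
     (SUP y\<in>{y. norm y \<le> real_of_rat r}. fm_val T ax (ay(n := (ay n)(r := y))) \<phi>)"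

text \<open>Operator symbols T_{r,s} available for T: those with s \<ge> \<parallel>T\<parallel> r.\<close>
definition op_sig :: "('x::real_normed_vector \<Rightarrow> 'y::real_normed_vector) \<Rightarrow> rat \<Rightarrow> rat \<Rightarrow> bool" where
  "op_sig T r s \<longleftrightarrow> onorm T * real_of_rat r \<le> real_of_rat s"

text \<open>Elementary equivalence: equal values of all finitary sentences of the
  common signature (sentences evaluated at an arbitrary fixed assignment,
  here the zero assignment, on which closed formulas do not depend).\<close>
definition op_elem_equiv ::
  "('x::real_normed_vector \<Rightarrow> 'y::real_normed_vector) \<Rightarrow>
   ('u::real_normed_vector \<Rightarrow> 'v::real_normed_vector) \<Rightarrow> bool" where
  "op_elem_equiv T T' \<longleftrightarrow>
     (\<forall>\<phi>. wf_fm (\<lambda>r s. op_sig T r s \<and> op_sig T' r s) \<phi> \<and> fv_fm \<phi> = {} \<longrightarrow>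
        fm_val T (\<lambda>_ _. 0) (\<lambda>_ _. 0) \<phi> = fm_val T' (\<lambda>_ _. 0) (\<lambda>_ _. 0) \<phi>)"

end

theory Submission
  imports Defs
begin

text \<open>Call \<open>T\<close> almost open with constant \<open>c\<close> if every point of the closed unit ball of
  \<open>Y\<close> is a limit of images of points of norm at most \<open>c\<close>. For bounded operators between Banach
  spaces, surjectivity is equivalent to being almost open with some constant: one direction is
  the Baire category argument of the open mapping theorem, the other the usual successive
  approximation. Almost openness with a rational constant \<open>q\<close> says exactly that the sentence
  \<open>sup\<^sub>y inf\<^sub>x d(T x, y)\<close> (over \<open>y \<in> B\<^sub>Y(1)\<close>, \<open>x \<in> B\<^sub>X(q)\<close>) has value \<open>0\<close>; this
  sentence lies in the common signature as soon as the target sort is large enough for both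
  operators, so elementary equivalence transfers almost openness, and hence surjectivity.\<close>

definition almost_open_with :: "('x::real_normed_vector \<Rightarrow> 'y::real_normed_vector) \<Rightarrow> real \<Rightarrow> bool"
  where "almost_open_with T c \<longleftrightarrow>
    (\<forall>y \<epsilon>. norm y \<le> 1 \<longrightarrow> \<epsilon> > 0 \<longrightarrow> (\<exists>x. norm x \<le> c \<and> norm (T x - y) < \<epsilon>))"

lemma almost_open_with_mono:
  fixes T :: "'x::real_normed_vector \<Rightarrow> 'y::real_normed_vector"
  assumes "almost_open_with T c" and "c \<le> d"
  shows "almost_open_with T d"
  unfolding almost_open_with_def
proof (intro allI impI)
  fix y :: 'y and \<epsilon> :: real assume "norm y \<le> 1" "\<epsilon> > 0"
  then obtain x where x: "norm x \<le> c" "norm (T x - y) < \<epsilon>"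
    using assms(1) unfolding almost_open_with_def by blast
  have "norm x \<le> d" using x(1) assms(2) by linarith
  with x(2) show "\<exists>x. norm x \<le> d \<and> norm (T x - y) < \<epsilon>"
    by blast
qed

lemma almost_open_with_nonneg:
  fixes T :: "'x::real_normed_vector \<Rightarrow> 'y::real_normed_vector"
  assumes "almost_open_with T c"
  shows "0 \<le> c"
proof -
  have "norm (0::'y) \<le> 1" "(1::real) > 0" by simp_all
  then have "\<exists>x. norm x \<le> c \<and> norm (T x - 0) < 1"
    using assms unfolding almost_open_with_def by blast
  then show ?thesis using norm_ge_zero order_trans by blast
qed

lemma almost_open_with_halving:
  fixes T :: "'x::real_normed_vector \<Rightarrow> 'y::real_normed_vector"
  assumes "linear T" and "almost_open_with T c"
  shows "\<exists>x. norm x \<le> c * norm y \<and> norm (T x - y) \<le> norm y / 2"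
proof (cases "y = 0")
  case True
  then show ?thesis
    using assms by (intro exI[of _ 0]) (simp add: linear_0 almost_open_with_nonneg)
next
  case False
  define u where "u = y /\<^sub>R norm y"
  have "norm u \<le> 1" "(1/2::real) > 0" using False by (simp_all add: u_def)
  then obtain x where x: "norm x \<le> c" "norm (T x - u) < 1/2"
    using assms(2) unfolding almost_open_with_def by blast
  have "T (norm y *\<^sub>R x) - y = norm y *\<^sub>R (T x - u)"
    using False assms(1) by (simp add: u_def linear_scale scaleR_diff_right)
  then have "norm (T (norm y *\<^sub>R x) - y) = norm y * norm (T x - u)" by simp
  also have "\<dots> \<le> norm y / 2"
    using x(2) mult_left_mono[of "norm (T x - u)" "1/2" "norm y"] by simp
  finally show ?thesis
    using x(1) mult_left_mono[OF x(1) norm_ge_zero[of y]]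
    by (intro exI[of _ "norm y *\<^sub>R x"]) (simp add: mult.commute)
qed

lemma surj_if_almost_open:
  fixes T :: "'x::banach \<Rightarrow> 'y::real_normed_vector"
  assumes T: "bounded_linear T" and "almost_open_with T c"
  shows "surj T"
proof -
  have c: "0 \<le> c" using assms(2) by (rule almost_open_with_nonneg)
  obtain g where g: "\<And>y. norm (g y) \<le> c * norm y" "\<And>y. norm (T (g y) - y) \<le> norm y / 2"
    using almost_open_with_halving[OF bounded_linear.linear[OF T] assms(2)] by metis
  have "y \<in> range T" for y
  proof -
    define r where "r = rec_nat y (\<lambda>_ r. r - T (g r))"
    have r0: "r 0 = y" and rS: "\<And>n. r (Suc n) = r n - T (g (r n))"
      by (simp_all add: r_def)
    have r_bound: "norm (r n) \<le> norm y * (1/2)^n" for n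
    proof (induction n)
      case (Suc n)
      have "norm (r (Suc n)) = norm (T (g (r n)) - r n)"
        by (simp add: rS norm_minus_commute)
      also have "\<dots> \<le> norm (r n) / 2" by (rule g(2))
      also have "\<dots> \<le> norm y * (1/2)^n / 2" using Suc by simp
      finally show ?case by simp
    qed (simp add: r0)
    define x where "x n = g (r n)" for n
    have x_bound: "norm (x n) \<le> c * norm y * (1/2)^n" for n
    proof -
      have "norm (x n) \<le> c * norm (r n)" unfolding x_def by (rule g(1))
      also have "\<dots> \<le> c * (norm y * (1/2)^n)" using r_bound c by (rule mult_left_mono)
      finally show ?thesis by (simp only: mult.assoc)
    qed
    have "summable (\<lambda>n. norm (x n))"
    proof (rule summable_comparison_test)
      show "summable (\<lambda>n. c * norm y * (1/2::real)^n)"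
        by (rule summable_mult) (rule summable_geometric; simp)
      show "\<exists>N. \<forall>n\<ge>N. norm (norm (x n)) \<le> c * norm y * (1/2)^n"
        using x_bound by simp
    qed
    then have x_sums: "x sums suminf x"
      by (rule summable_sums[OF summable_norm_cancel])
    have "r \<longlonglongrightarrow> 0"
    proof (rule Lim_null_comparison)
      show "(\<lambda>n. norm y * (1/2::real)^n) \<longlonglongrightarrow> 0"
        by (intro tendsto_mult_right_zero LIMSEQ_realpow_zero) simp_all
      show "\<forall>\<^sub>F n in sequentially. norm (r n) \<le> norm y * (1/2)^n"
        by (rule always_eventually) (use r_bound in blast)
    qed
    then have "(\<lambda>n. r n - r (Suc n)) sums (r 0 - 0)"
      by (rule telescope_sums')
    moreover have "(\<lambda>n. r n - r (Suc n)) = (\<lambda>n. T (x n))"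
      by (simp add: x_def rS)
    ultimately have "(\<lambda>n. T (x n)) sums y"
      using r0 by simp
    then have "T (suminf x) = y"
      using bounded_linear.sums[OF T x_sums] by (rule sums_unique2[symmetric])
    then show ?thesis by blast
  qed
  then show ?thesis by blast
qed

lemma interior_closure_image_cball_nonempty:
  fixes T :: "'x::real_normed_vector \<Rightarrow> 'y::banach"
  assumes "surj T"
  shows "\<exists>n::nat. interior (closure (T ` cball 0 (real n))) \<noteq> {}"
proof (rule ccontr)
  define C where "C n = closure (T ` cball 0 (real n))" for n
  assume "\<not> ?thesis"
  then have "euclidean interior_of \<Union>(range C) = {}"
    by (intro Baire_category_alt) (auto simp: C_def completely_metrizable_space_euclidean)
  moreover have "\<Union>(range C) = UNIV"
  proof -
    have "y \<in> \<Union>(range C)" for y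
    proof -
      obtain x where "y = T x" using assms by (metis surjD)
      moreover obtain n :: nat where "norm x \<le> real n" using real_arch_simple by blast
      ultimately have "y \<in> C n" unfolding C_def by (intro subsetD[OF closure_subset]) auto
      then show ?thesis by blast
    qed
    then show ?thesis by blast
  qed
  ultimately show False by simp
qed

lemma ball_zero_subset_closure_image_cball:
  fixes T :: "'x::real_normed_vector \<Rightarrow> 'y::real_normed_vector"
  assumes T: "linear T" and ball: "ball y0 e \<subseteq> closure (T ` cball 0 r)"
  shows "ball 0 e \<subseteq> closure (T ` cball 0 (2 * r))"
proof
  fix z :: 'y assume z: "z \<in> ball 0 e"
  show "z \<in> closure (T ` cball 0 (2 * r))"
    unfolding closure_approachable
  proof (intro allI impI)
    fix \<epsilon> :: real assume "\<epsilon> > 0"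
    have "norm z < e" using z by simp
    then have "e > 0" using norm_ge_zero[of z] by linarith
    then have "y0 + z \<in> closure (T ` cball 0 r)" "y0 \<in> closure (T ` cball 0 r)"
      using z ball by (auto simp: dist_norm)
    then obtain x1 x2 where x: "norm x1 \<le> r" "dist (T x1) (y0 + z) < \<epsilon>/2"
        "norm x2 \<le> r" "dist (T x2) y0 < \<epsilon>/2"
      using \<open>\<epsilon> > 0\<close> unfolding closure_approachable by (auto dest!: spec[of _ "\<epsilon>/2"])
    have "T (x1 - x2) - z = (T x1 - (y0 + z)) - (T x2 - y0)"
      using T by (simp add: linear_diff)
    then have "norm (T (x1 - x2) - z) \<le> norm (T x1 - (y0 + z)) + norm (T x2 - y0)"
      by (metis norm_triangle_ineq4)
    then have "dist (T (x1 - x2)) z < \<epsilon>"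
      using x(2,4) by (simp add: dist_norm)
    moreover have "norm (x1 - x2) \<le> 2 * r"
      using x(1,3) norm_triangle_ineq4[of x1 x2] by simp
    ultimately show "\<exists>y\<in>T ` cball 0 (2 * r). dist y z < \<epsilon>" by auto
  qed
qed

lemma almost_open_if_ball_subset_closure_image:
  fixes T :: "'x::real_normed_vector \<Rightarrow> 'y::real_normed_vector"
  assumes T: "linear T" and e: "e > 0" and ball: "ball 0 e \<subseteq> closure (T ` cball 0 r)"
  shows "almost_open_with T (2 * r / e)"
  unfolding almost_open_with_def
proof (intro allI impI)
  fix y :: 'y and \<epsilon> :: real assume y: "norm y \<le> 1" and "\<epsilon> > 0"
  have "(e/2) *\<^sub>R y \<in> closure (T ` cball 0 r)"
    using ball y e by (intro subsetD[OF ball]) (simp add: mult_le_one)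
  moreover have "\<epsilon> * e / 2 > 0" using \<open>\<epsilon> > 0\<close> e by simp
  ultimately obtain x where x: "norm x \<le> r" "norm (T x - (e/2) *\<^sub>R y) < \<epsilon> * e / 2"
    unfolding closure_approachable by (fastforce simp: dist_norm)
  have "T ((2/e) *\<^sub>R x) - y = (2/e) *\<^sub>R (T x - (e/2) *\<^sub>R y)"
    using T e by (simp add: linear_scale scaleR_diff_right)
  then have "norm (T ((2/e) *\<^sub>R x) - y) = (2/e) * norm (T x - (e/2) *\<^sub>R y)"
    using e by simp
  also have "\<dots> < \<epsilon>"
    using mult_strict_left_mono[OF x(2), of "2/e"] e by simp
  finally show "\<exists>x. norm x \<le> 2 * r / e \<and> norm (T x - y) < \<epsilon>"
    using x(1) e by (intro exI[of _ "(2/e) *\<^sub>R x"]) (simp add: divide_right_mono)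
qed

lemma almost_open_if_surj:
  fixes T :: "'x::real_normed_vector \<Rightarrow> 'y::banach"
  assumes "linear T" and "surj T"
  shows "\<exists>c. almost_open_with T c"
proof -
  obtain n :: nat and y0 where "y0 \<in> interior (closure (T ` cball 0 (real n)))"
    using interior_closure_image_cball_nonempty[OF assms(2)] by blast
  then obtain e where "e > 0" "ball y0 e \<subseteq> closure (T ` cball 0 (real n))"
    by (auto simp: mem_interior)
  then show ?thesis
    using almost_open_if_ball_subset_closure_image ball_zero_subset_closure_image_cball assms(1)
    by blast
qed

lemma SUP_INF_eq_0_iff:
  fixes f :: "'a \<Rightarrow> 'b \<Rightarrow> real"
  assumes "A \<noteq> {}" and nonneg: "\<And>y x. 0 \<le> f y x"
    and "b \<in> B" and bounded: "\<And>y. y \<in> A \<Longrightarrow> f y b \<le> K"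
  shows "(SUP y\<in>A. INF x\<in>B. f y x) = 0 \<longleftrightarrow> (\<forall>y\<in>A. \<forall>\<epsilon>>0. \<exists>x\<in>B. f y x < \<epsilon>)"
proof -
  have B: "B \<noteq> {}" using \<open>b \<in> B\<close> by blast
  have bdd_below: "bdd_below (f y ` B)" for y
    using nonneg by (intro bdd_belowI) auto
  have INF_nonneg: "0 \<le> (INF x\<in>B. f y x)" for y
    using B nonneg by (intro cINF_greatest) auto
  have "(INF x\<in>B. f y x) \<le> K" if "y \<in> A" for y
    using cINF_lower[OF bdd_below \<open>b \<in> B\<close>] bounded[OF that] by (rule order_trans)
  then have "bdd_above ((\<lambda>y. INF x\<in>B. f y x) ` A)"
    by (intro bdd_aboveI[of _ K]) blast
  then have "(SUP y\<in>A. INF x\<in>B. f y x) \<le> 0 \<longleftrightarrow> (\<forall>y\<in>A. (INF x\<in>B. f y x) \<le> 0)"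
    by (rule cSUP_le_iff[OF assms(1)])
  moreover have "(INF x\<in>B. f y x) \<le> 0 \<longleftrightarrow> (\<forall>\<epsilon>>0. \<exists>x\<in>B. f y x < \<epsilon>)" for y
    using cINF_less_iff[OF B bdd_below] INF_nonneg[of y]
    by (metis dual_order.strict_trans2 less_eq_real_def not_less_iff_gr_or_eq)
  moreover have "(SUP y\<in>A. INF x\<in>B. f y x) \<ge> 0"
    using assms(1) INF_nonneg \<open>bdd_above _\<close> by (meson all_not_in_conv cSUP_upper2)
  ultimately show ?thesis by (metis order_antisym_conv)
qed

text \<open>The sentence \<open>sup y \<in> B\<^sub>Y(1). inf x \<in> B\<^sub>X(q). d(T x, y)\<close>, where \<open>T x\<close> and \<open>y\<close> are compared in
  \<open>B\<^sub>Y(s)\<close> after applying \<open>T : B\<^sub>X(q) \<rightarrow> B\<^sub>Y(s)\<close> and the inclusion \<open>B\<^sub>Y(1) \<rightarrow> B\<^sub>Y(s)\<close>.\<close>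
definition almost_open_sentence :: "rat \<Rightarrow> rat \<Rightarrow> fm" where
  "almost_open_sentence q s = FSup 1 SY 1 (FInf 0 SX q
     (FDist SY s (App q s (V 0 SX q)) (Inc SY 1 s (V 1 SY 1))))"

lemma closed_almost_open_sentence: "fv_fm (almost_open_sentence q s) = {}"
  by (auto simp: almost_open_sentence_def)

lemma wf_almost_open_sentence:
  assumes "0 \<le> q" and "1 < s" and "sig q s"
  shows "wf_fm sig (almost_open_sentence q s)"
  using assms by (simp add: almost_open_sentence_def)

lemma almost_open_sentence_eq_0_iff:
  fixes T :: "'x::real_normed_vector \<Rightarrow> 'y::real_normed_vector"
  assumes "0 \<le> q" and "0 < s"
  shows "fm_val T ax ay (almost_open_sentence q s) = 0 \<longleftrightarrow> almost_open_with T (real_of_rat q)"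
proof -
  have "fm_val T ax ay (almost_open_sentence q s) =
      (SUP y\<in>{y. norm y \<le> 1}. INF x\<in>{x. norm x \<le> real_of_rat q}.
        norm (T x - y) / (2 * real_of_rat s))"
    by (simp add: almost_open_sentence_def)
  also have "\<dots> = 0 \<longleftrightarrow> (\<forall>y\<in>{y. norm y \<le> 1}. \<forall>\<epsilon>>0. \<exists>x\<in>{x. norm x \<le> real_of_rat q}.
        norm (T x - y) / (2 * real_of_rat s) < \<epsilon>)"
  proof (rule SUP_INF_eq_0_iff[where b=0 and K="(norm (T 0) + 1) / (2 * real_of_rat s)"])
    fix y :: 'y assume "y \<in> {y. norm y \<le> 1}"
    then have "norm (T 0 - y) \<le> norm (T 0) + 1"
      using norm_triangle_ineq4[of "T 0" y] by simp
    then show "norm (T 0 - y) / (2 * real_of_rat s) \<le> (norm (T 0) + 1) / (2 * real_of_rat s)"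
      using assms(2) by (simp add: divide_right_mono)
  qed (use assms in \<open>auto intro!: exI[of _ 0]\<close>)
  also have "\<dots> \<longleftrightarrow> almost_open_with T (real_of_rat q)"
  proof -
    have s: "2 * real_of_rat s > 0" using assms(2) by simp
    have "(\<forall>\<epsilon>>0. \<exists>x. norm x \<le> real_of_rat q \<and> norm (T x - y) / (2 * real_of_rat s) < \<epsilon>) \<longleftrightarrow>
        (\<forall>\<epsilon>>0. \<exists>x. norm x \<le> real_of_rat q \<and> norm (T x - y) < \<epsilon>)" for y
    proof (intro iffI allI impI)
      fix \<epsilon> :: real assume "\<epsilon> > 0" and
        "\<forall>\<epsilon>>0. \<exists>x. norm x \<le> real_of_rat q \<and> norm (T x - y) / (2 * real_of_rat s) < \<epsilon>"
      then show "\<exists>x. norm x \<le> real_of_rat q \<and> norm (T x - y) < \<epsilon>"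
        using s by (auto simp: pos_divide_less_eq dest!: spec[of _ "\<epsilon> / (2 * real_of_rat s)"])
    next
      fix \<epsilon> :: real assume "\<epsilon> > 0" and
        "\<forall>\<epsilon>>0. \<exists>x. norm x \<le> real_of_rat q \<and> norm (T x - y) < \<epsilon>"
      then show "\<exists>x. norm x \<le> real_of_rat q \<and> norm (T x - y) / (2 * real_of_rat s) < \<epsilon>"
        using s by (auto simp: pos_divide_less_eq dest!: spec[of _ "\<epsilon> * (2 * real_of_rat s)"])
    qed
    then show ?thesis by (simp add: almost_open_with_def)
  qed
  finally show ?thesis .
qed

lemma op_elem_equiv_sym:
  assumes "op_elem_equiv T T'"
  shows "op_elem_equiv T' T"
  unfolding op_elem_equiv_def
proof (intro allI impI)
  fix \<phi> assume "wf_fm (\<lambda>r s. op_sig T' r s \<and> op_sig T r s) \<phi> \<and> fv_fm \<phi> = {}"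
  moreover have "(\<lambda>r s. op_sig T' r s \<and> op_sig T r s) = (\<lambda>r s. op_sig T r s \<and> op_sig T' r s)"
    by auto
  ultimately have "wf_fm (\<lambda>r s. op_sig T r s \<and> op_sig T' r s) \<phi> \<and> fv_fm \<phi> = {}"
    by simp
  then show "fm_val T' (\<lambda>_ _. 0) (\<lambda>_ _. 0) \<phi> = fm_val T (\<lambda>_ _. 0) (\<lambda>_ _. 0) \<phi>"
    using assms unfolding op_elem_equiv_def by simp
qed

lemma almost_open_with_transfer:
  fixes T :: "'x::real_normed_vector \<Rightarrow> 'y::real_normed_vector"
    and T' :: "'u::real_normed_vector \<Rightarrow> 'v::real_normed_vector"
  assumes equiv: "op_elem_equiv T T'" and q: "0 \<le> q"
    and "almost_open_with T (real_of_rat q)"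
  shows "almost_open_with T' (real_of_rat q)"
proof -
  obtain m :: nat where m: "max (onorm T * real_of_rat q) (onorm T' * real_of_rat q) \<le> real m"
    using real_arch_simple by blast
  \<comment> \<open>\<open>s\<close> must exceed \<open>1\<close> for the inclusion \<open>B\<^sub>Y(1) \<rightarrow> B\<^sub>Y(s)\<close> and bound both \<open>\<parallel>T\<parallel> q\<close> and \<open>\<parallel>T'\<parallel> q\<close>\<close>
  define s :: rat where "s = of_nat m + 2"
  have s: "1 < s" "0 < s" by (simp_all add: s_def)
  have "real_of_rat s = real m + 2" by (simp add: s_def of_rat_add)
  then have "op_sig T q s \<and> op_sig T' q s"
    using m by (simp add: op_sig_def)
  then have "wf_fm (\<lambda>r s. op_sig T r s \<and> op_sig T' r s) (almost_open_sentence q s)"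
    using q s by (intro wf_almost_open_sentence)
  then have "fm_val T (\<lambda>_ _. 0) (\<lambda>_ _. 0) (almost_open_sentence q s) =
      fm_val T' (\<lambda>_ _. 0) (\<lambda>_ _. 0) (almost_open_sentence q s)"
    using equiv closed_almost_open_sentence unfolding op_elem_equiv_def by blast
  moreover have "fm_val T (\<lambda>_ _. 0) (\<lambda>_ _. 0) (almost_open_sentence q s) = 0"
    using almost_open_sentence_eq_0_iff[OF q s(2)] assms(3) by blast
  ultimately show ?thesis
    using almost_open_sentence_eq_0_iff[OF q s(2)] by metis
qed

lemma surj_transfer:
  fixes T :: "'x::banach \<Rightarrow> 'y::banach" and T' :: "'u::banach \<Rightarrow> 'v::banach"
  assumes "bounded_linear T" and "bounded_linear T'" and "op_elem_equiv T T'"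
    and "surj T"
  shows "surj T'"
proof -
  obtain c where c: "almost_open_with T c"
    using almost_open_if_surj[OF bounded_linear.linear[OF assms(1)] assms(4)] by blast
  obtain n :: nat where "c \<le> real n" using real_arch_simple by blast
  then have "almost_open_with T (real_of_rat (of_nat n))"
    using almost_open_with_mono[OF c] by simp
  then have "almost_open_with T' (real_of_rat (of_nat n))"
    using assms(3) by (rule almost_open_with_transfer[rotated 2]) simp
  then show ?thesis by (rule surj_if_almost_open[OF assms(2)])
qed

theorem proposition5p1:
  fixes T :: "'x::banach \<Rightarrow> 'y::banach" and T' :: "'u::banach \<Rightarrow> 'v::banach"
  assumes "bounded_linear T" and "bounded_linear T'"
    and "op_elem_equiv T T'"
  shows "surj T \<longleftrightarrow> surj T'"
  using surj_transfer[OF assms] surj_transfer[OF assms(2,1) op_elem_equiv_sym[OF assms(3)]]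
  by blast

end
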